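(* Let $V,c_1,c_2,K,V',c'_\lambda$ be as follows: $V$ is a finite-dimensional complex vector space; $c_1,c_2\in\wedge^2V$ with $c_\lambda=\lambda_1c_1+\lambda_2c_2$ nondegenerate for generic $\lambda$; $K\subset V$ is a subspace; and the images $c'_i$ of $c_i$ in $\wedge^2(V/K)$ are linearly independent, with $c'_\lambda=\lambda_1c_1'+\lambda_2c_2'$. Let $\Lambda_1=\mathbb C\hat\lambda_1,\dots,\Lambda_s=\mathbb C\hat\lambda_s$ be the complex lines in $\mathbb C^2$ on which $c_\lambda$ is degenerate, and let $\Lambda=\bigcup_i\Lambda_i$. Assume $K^\perp\cap\ker c^\sharp_{\hat\lambda_i}=\{0\}$ for $i=1,\dots,s$. Set $k_\lambda=\dim\bigl(K\cap c_\lambda^\sharp(K^\perp)\bigr)$. Then $k_\lambda=\operatorname{codim}P_{c'_\lambda}$ in $V/K$ for every $\lambda\ne0$, where $P_{c'_\lambda}=\operatorname{im}(c'_\lambda)^\sharp$. Consequently, $\operatorname{rank}c'_\lambda=\max_\mu\operatorname{rank}c'_\mu$ for all $\lambda\in\mathbb C^2\setminus\{0\}$ if and only if: (i) $k_\lambda=k$ is constant on $\mathbb C^2\setminus\Lambda$; and (ii) $k_{\hat\lambda_1}=\dots=k_{\hat\lambda_s}=k$.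
   Context: $K^\perp\subset V^*$ denotes the annihilator of $K$. $b^\sharp:V^*\to V$ is contraction in the first argument, and $\ker b^\sharp$ is its kernel. *)

theory Defs
  imports "HOL-Analysis.Analysis"
begin

text \<open>V is realised as complex^'n, its dual V* also as complex^'n via the
  standard (bilinear) pairing.  A bivector c in wedge^2 V is represented by its
  skew-symmetric coefficient matrix C, c = (1/2) sum_ij C_ij e_i wedge e_j.\<close>

definition dpair :: "complex^'n \<Rightarrow> complex^'n \<Rightarrow> complex" where
  "dpair \<xi> v = (\<Sum>i\<in>UNIV. \<xi>$i * v$i)"

definition bivector :: "complex^'n^'n \<Rightarrow> bool" where
  "bivector C \<longleftrightarrow> transpose C = - C"

definition sharp :: "complex^'n^'n \<Rightarrow> complex^'n \<Rightarrow> complex^'n" where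
  "sharp C \<xi> = \<xi> v* C"

definition nondeg :: "complex^'n^'n \<Rightarrow> bool" where
  "nondeg C \<longleftrightarrow> (\<forall>\<xi>. sharp C \<xi> = 0 \<longrightarrow> \<xi> = 0)"

definition annih :: "(complex^'n) set \<Rightarrow> (complex^'n) set" where
  "annih K = {\<xi>. \<forall>v\<in>K. dpair \<xi> v = 0}"

definition comb :: "complex^'n^'n \<Rightarrow> complex^'n^'n \<Rightarrow> complex^2 \<Rightarrow> complex^'n^'n" where
  "comb C1 C2 l = (\<chi> i j. l$1 * C1$i$j + l$2 * C2$i$j)"

definition kdim :: "complex^'n^'n \<Rightarrow> complex^'n^'n \<Rightarrow> (complex^'n) set \<Rightarrow> complex^2 \<Rightarrow> nat" where
  "kdim C1 C2 K l = vec.dim (K \<inter> sharp (comb C1 C2 l) ` annih K)"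

text \<open>Image of a bivector under a linear map q (matrix Q): wedge^2 q.\<close>
definition push :: "complex^'n^'m \<Rightarrow> complex^'n^'n \<Rightarrow> complex^'m^'m" where
  "push Q C = Q ** C ** transpose Q"

definition Pc :: "complex^'m^'m \<Rightarrow> (complex^'m) set" where
  "Pc C = range (sharp C)"

definition brank :: "complex^'m^'m \<Rightarrow> nat" where
  "brank C = vec.dim (Pc C)"

end

theory Submission
  imports Defs
begin

text \<open>Since Q is onto with kernel K, the annihilator K^perp is the image of Q^T, and
  (c'_l)^sharp = Q o c_l^sharp o Q^T; hence P_{c'_l} = Q(W_l) with W_l = c_l^sharp(K^perp).
  For l \<noteq> 0 the map c_l^sharp is injective on K^perp (off the degenerate lines because c_l is
  nondegenerate, on them by the transversality hypothesis), so dim W_l = dim K^perp = dim V/K.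
  Rank-nullity for Q restricted to W_l gives dim P_{c'_l} + k_l = dim V/K. The statement about
  ranks follows, since c'_0 = 0 has rank 0 and k_l does not change when l is rescaled.\<close>

context vector_space
begin

lemma subspace_image_scale_eq:
  assumes "subspace S" and "c \<noteq> 0"
  shows "scale c ` S = S"
proof
  show "scale c ` S \<subseteq> S" using assms(1) subspace_scale by blast
  show "S \<subseteq> scale c ` S"
  proof
    fix x assume "x \<in> S"
    then have "x = scale c (scale (inverse c) x)" "scale (inverse c) x \<in> S"
      using assms subspace_scale by auto
    then show "x \<in> scale c ` S" by blast
  qed
qed

end

context finite_dimensional_vector_space
begin

lemma independent_span_Int_span_Diff:
  assumes "independent B" and "B0 \<subseteq> B"
  shows "span B0 \<inter> span (B - B0) = {0}"
proof -
  let ?B1 = "B - B0"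
  have "finite B" using assms(1) finiteI_independent by blast
  have "dim {x + y |x y. x \<in> span B0 \<and> y \<in> span ?B1} + dim (span B0 \<inter> span ?B1)
      = dim (span B0) + dim (span ?B1)"
    by (rule dim_sums_Int) simp_all
  also have "{x + y |x y. x \<in> span B0 \<and> y \<in> span ?B1} = span B"
    using assms(2) span_Un[of B0 ?B1] by (simp add: Un_absorb1)
  also have "dim (span B0) + dim (span ?B1) = card B0 + card ?B1"
    using independent_mono[OF assms(1)] assms(2)
    by (simp add: dim_eq_card_independent)
  also have "\<dots> = card B"
    using assms(2) \<open>finite B\<close> by (metis card_Diff_subset card_mono finite_subset le_add_diff_inverse)
  finally have "dim (span B0 \<inter> span ?B1) = 0"
    using assms(1) by (simp add: dim_eq_card_independent)
  then show ?thesis by (auto simp: span_zero)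
qed

end

context finite_dimensional_vector_space_pair
begin

lemma dim_image_add_dim_Int_kernel:
  assumes f: "Vector_Spaces.linear s1 s2 f" and W: "vs1.subspace W"
  shows "vs2.dim (f ` W) + vs1.dim (W \<inter> {v. f v = 0}) = vs1.dim W"
proof -
  interpret f: Vector_Spaces.linear s1 s2 f by fact
  let ?N = "W \<inter> {v. f v = 0}"
  have "vs1.subspace ?N"
    using W f.subspace_kernel vs1.subspace_inter by blast
  obtain B0 where B0: "B0 \<subseteq> ?N" "vs1.independent B0" "?N \<subseteq> vs1.span B0" "card B0 = vs1.dim ?N"
    using vs1.basis_exists by blast
  obtain B where B: "B0 \<subseteq> B" "B \<subseteq> W" "vs1.independent B" "W \<subseteq> vs1.span B"
    using vs1.maximal_independent_subset_extend[OF _ B0(2)] B0(1) by blast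
  define B1 where "B1 = B - B0"
  have "finite B" using B(3) vs1.finiteI_independent by blast
  have dimW: "vs1.dim W = card B0 + card B1"
    using vs1.dim_unique[OF B(2,4,3) refl] B(1) \<open>finite B\<close> unfolding B1_def
    by (metis card_Diff_subset card_mono finite_subset le_add_diff_inverse)
  have spanB0: "vs1.span B0 = ?N"
    using B0 vs1.span_minimal[OF B0(1) \<open>vs1.subspace ?N\<close>] by blast
  have "B1 \<subseteq> W" "vs1.independent B1"
    using B(2) vs1.independent_mono[OF B(3)] B1_def by auto
  have spanB1: "vs1.span B1 \<subseteq> W"
    using vs1.span_minimal[OF \<open>B1 \<subseteq> W\<close> W] .
  have "inj_on f (vs1.span B1)"
  proof (rule f.inj_on_iff_eq_0[THEN iffD2, OF vs1.subspace_span], intro ballI impI)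
    fix x assume "x \<in> vs1.span B1" "f x = 0"
    with spanB1 have "x \<in> vs1.span B0 \<inter> vs1.span B1" using spanB0 by blast
    then show "x = 0"
      using vs1.independent_span_Int_span_Diff[OF B(3,1)] B1_def by blast
  qed
  have "f ` W = f ` vs1.span B1"
  proof
    have "W = vs1.span (B0 \<union> B1)"
      using vs1.span_minimal[OF B(2) W] B(1,4) B1_def by (simp add: Un_absorb1)
    then show "f ` W \<subseteq> f ` vs1.span B1"
      using spanB0 by (force simp: vs1.span_Un f.add)
    show "f ` vs1.span B1 \<subseteq> f ` W"
      using spanB1 by blast
  qed
  then have "vs2.dim (f ` W) = vs1.dim (vs1.span B1)"
    using dim_image_eq[OF f, of "vs1.span B1"] \<open>inj_on f (vs1.span B1)\<close> by (simp add: vs1.span_span)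
  also have "\<dots> = card B1"
    using \<open>vs1.independent B1\<close> by (simp add: vs1.dim_eq_card_independent)
  finally show ?thesis using dimW B0(4) by simp
qed

end

lemma sharp_eq_matrix_vector_mult: "sharp C = (*v) (transpose C)"
  by (simp add: sharp_def fun_eq_iff)

lemma linear_sharp: "Vector_Spaces.linear (*s) (*s) (sharp C)"
  unfolding sharp_eq_matrix_vector_mult by (rule matrix_vector_mul_linear_gen)

lemma dpair_vector_matrix: "dpair (x v* A) y = dpair x (A *v y)"
  unfolding dpair_def vector_matrix_mult_def matrix_vector_mult_def
  by (simp add: sum_distrib_left sum_distrib_right mult_ac) (rule sum.swap)

lemma dpair_zero_right: "dpair \<xi> 0 = 0"
  by (simp add: dpair_def)

lemma dpair_diff_right: "dpair \<xi> (u - v) = dpair \<xi> u - dpair \<xi> v"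
  by (simp add: dpair_def sum_subtractf right_diff_distrib)

lemma dpair_axis: "dpair \<xi> (axis i 1) = \<xi> $ i"
  by (simp add: dpair_def axis_def if_distrib cong: if_cong)

lemma dpair_eqI: "(\<And>v. dpair \<xi> v = dpair \<eta> v) \<Longrightarrow> \<xi> = \<eta>"
  by (metis dpair_axis vec_eq_iff)

lemma subspace_annih: "vec.subspace (annih K)"
  by (auto simp: vec.subspace_def annih_def dpair_def distrib_right sum.distrib mult.assoc
      simp flip: sum_distrib_left)

lemma annih_kernel_eq_range_transpose:
  fixes Q :: "complex^'n^'m"
  assumes "surj ((*v) Q)"
  shows "annih {v. Q *v v = 0} = range ((*v) (transpose Q))"
proof
  show "range ((*v) (transpose Q)) \<subseteq> annih {v. Q *v v = 0}"
    by (auto simp: annih_def dpair_vector_matrix dpair_zero_right)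
  obtain R where R: "Q ** R = mat 1"
    using assms matrix_right_invertible_surjective by blast
  show "annih {v. Q *v v = 0} \<subseteq> range ((*v) (transpose Q))"
  proof
    fix \<xi> assume \<xi>: "\<xi> \<in> annih {v. Q *v v = 0}"
    have "dpair (transpose Q *v (transpose R *v \<xi>)) v = dpair \<xi> v" for v
    proof -
      have "Q *v (v - R *v (Q *v v)) = 0"
        by (simp add: matrix_vector_mult_diff_distrib matrix_vector_mul_assoc matrix_mul_assoc R)
      then have "dpair \<xi> (v - R *v (Q *v v)) = 0"
        using \<xi> by (simp add: annih_def)
      then show ?thesis by (simp add: dpair_vector_matrix dpair_diff_right)
    qed
    then have "\<xi> = transpose Q *v (transpose R *v \<xi>)"
      by (metis dpair_eqI)
    then show "\<xi> \<in> range ((*v) (transpose Q))" by blast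
  qed
qed

lemma dim_range_transpose_eq_card:
  fixes Q :: "'a::field^'n^'m"
  assumes "surj ((*v) Q)"
  shows "vec.dim (range ((*v) (transpose Q))) = CARD('m)"
proof -
  have "inj ((*v) (transpose Q))"
    using assms by (simp add: matrix_right_invertible_surjective[symmetric]
        matrix_left_invertible_injective[symmetric] left_invertible_transpose)
  then show ?thesis
    using vec.dim_image_eq[OF matrix_vector_mul_linear_gen, of "transpose Q" UNIV]
    by (simp add: vec_dim_card card_cart_basis)
qed

lemma push_comb: "comb (push Q A) (push Q B) l = push Q (comb A B l)"
  unfolding comb_def push_def
  by (simp add: vec_eq_iff matrix_matrix_mult_def transpose_def distrib_left
      sum.distrib sum_distrib_left sum_distrib_right mult_ac)

lemma sharp_push: "sharp (push Q C) \<eta> = Q *v sharp C (transpose Q *v \<eta>)"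
  by (simp add: sharp_def push_def vector_matrix_mul_assoc[symmetric])

lemma Pc_push: "Pc (push Q C) = (*v) Q ` sharp C ` range ((*v) (transpose Q))"
  unfolding Pc_def by (auto simp: sharp_push simp del: transpose_matrix_vector)

lemma dim_Int_sharp_annih_add_brank_push:
  fixes Q :: "complex^'n^'m"
  assumes Q: "surj ((*v) Q)" "{v. Q *v v = 0} = K"
    and inj: "inj_on (sharp C) (annih K)"
  shows "vec.dim (K \<inter> sharp C ` annih K) + brank (push Q C) = CARD('m)"
proof -
  let ?W = "sharp C ` annih K"
  have "vec.subspace ?W"
    using vec.linear_subspace_image[OF linear_sharp subspace_annih] .
  have "vec.dim ?W = vec.dim (annih K)"
    using vec.dim_image_eq[OF linear_sharp, of C "annih K"] inj vec.span_eq_iff subspace_annih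
    by metis
  also have "\<dots> = CARD('m)"
    using annih_kernel_eq_range_transpose[OF Q(1)] dim_range_transpose_eq_card[OF Q(1)] Q(2)
    by simp
  finally have "vec.dim ?W = CARD('m)" .
  moreover have "brank (push Q C) = vec.dim ((*v) Q ` ?W)"
    using annih_kernel_eq_range_transpose[OF Q(1)] Q(2) by (simp add: brank_def Pc_push)
  ultimately show ?thesis
    using vec.dim_image_add_dim_Int_kernel[OF matrix_vector_mul_linear_gen \<open>vec.subspace ?W\<close>, of Q]
    by (simp add: Q(2) Int_commute)
qed

lemma comb_zero [simp]: "comb C1 C2 0 = 0"
  by (simp add: comb_def vec_eq_iff)

lemma brank_zero [simp]: "brank 0 = 0"
  by (simp add: brank_def Pc_def sharp_def)

lemma not_nondeg_zero: "\<not> nondeg 0"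
  unfolding nondeg_def sharp_def by (metis axis_eq_0_iff vector_matrix_mult_0_right zero_neq_one)

lemma sharp_comb_scale: "sharp (comb C1 C2 (t *s l)) \<xi> = t *s sharp (comb C1 C2 l) \<xi>"
  unfolding sharp_def comb_def
  by (simp add: vec_eq_iff vector_matrix_mult_def sum_distrib_left mult_ac distrib_left)

lemma kdim_scale:
  assumes "t \<noteq> 0"
  shows "kdim C1 C2 K (t *s l) = kdim C1 C2 K l"
proof -
  have "sharp (comb C1 C2 (t *s l)) ` annih K = (*s) t ` sharp (comb C1 C2 l) ` annih K"
    by (simp add: sharp_comb_scale image_image)
  also have "\<dots> = sharp (comb C1 C2 l) ` annih K"
    using vec.linear_subspace_image[OF linear_sharp subspace_annih] assms
    by (rule vec.subspace_image_scale_eq)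
  finally show ?thesis by (simp add: kdim_def)
qed

lemma inj_on_sharp_comb_annih:
  assumes lines: "{l. \<not> nondeg (comb C1 C2 l)} = {t *s lhat i | t i. i < s}"
    and transv: "\<forall>i<s. annih K \<inter> {\<xi>. sharp (comb C1 C2 (lhat i)) \<xi> = 0} = {0}"
    and "l \<noteq> 0"
  shows "inj_on (sharp (comb C1 C2 l)) (annih K)"
proof -
  have "\<xi> = 0" if \<xi>: "\<xi> \<in> annih K" "sharp (comb C1 C2 l) \<xi> = 0" for \<xi>
  proof (cases "nondeg (comb C1 C2 l)")
    case True
    then show ?thesis using \<xi>(2) by (simp add: nondeg_def)
  next
    case False
    then obtain t i where "i < s" "l = t *s lhat i" using lines by blast
    with \<open>l \<noteq> 0\<close> \<xi>(2) have "sharp (comb C1 C2 (lhat i)) \<xi> = 0"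
      by (auto simp: sharp_comb_scale)
    then show ?thesis using transv \<open>i < s\<close> \<xi>(1) by blast
  qed
  then show ?thesis
    using vec.linear_inj_on_iff_eq_0[OF linear_sharp subspace_annih] by blast
qed

lemma kdim_constant_iff:
  assumes "0 < s" and lhat_nz: "\<forall>i<s. lhat i \<noteq> 0"
  shows "(\<exists>k. \<forall>l. l \<noteq> 0 \<longrightarrow> kdim C1 C2 K l = k) \<longleftrightarrow>
    (\<exists>k. (\<forall>l. l \<notin> {t *s lhat i | t i. i < s} \<longrightarrow> kdim C1 C2 K l = k)
       \<and> (\<forall>i<s. kdim C1 C2 K (lhat i) = k))"
proof
  assume "\<exists>k. \<forall>l. l \<noteq> 0 \<longrightarrow> kdim C1 C2 K l = k"
  then obtain k where k: "\<And>l. l \<noteq> 0 \<Longrightarrow> kdim C1 C2 K l = k" by blast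
  have "0 = 0 *s lhat 0" by simp
  then have zero_in: "0 \<in> {t *s lhat i | t i. i < s}"
    using \<open>0 < s\<close> by blast
  have "kdim C1 C2 K l = k" if "l \<notin> {t *s lhat i | t i. i < s}" for l
  proof -
    have "l \<noteq> 0" using that zero_in by blast
    then show ?thesis by (rule k)
  qed
  with k lhat_nz show "\<exists>k. (\<forall>l. l \<notin> {t *s lhat i | t i. i < s} \<longrightarrow> kdim C1 C2 K l = k)
       \<and> (\<forall>i<s. kdim C1 C2 K (lhat i) = k)" by blast
next
  assume "\<exists>k. (\<forall>l. l \<notin> {t *s lhat i | t i. i < s} \<longrightarrow> kdim C1 C2 K l = k)
       \<and> (\<forall>i<s. kdim C1 C2 K (lhat i) = k)"
  then obtain k where off: "\<forall>l. l \<notin> {t *s lhat i | t i. i < s} \<longrightarrow> kdim C1 C2 K l = k"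
    and on: "\<forall>i<s. kdim C1 C2 K (lhat i) = k" by blast
  have "kdim C1 C2 K l = k" if "l \<noteq> 0" for l
  proof (cases "l \<in> {t *s lhat i | t i. i < s}")
    case True
    then obtain t i where ti: "i < s" "l = t *s lhat i" by blast
    with \<open>l \<noteq> 0\<close> have "t \<noteq> 0" by auto
    with ti on show ?thesis by (simp add: kdim_scale)
  qed (use off in blast)
  then show "\<exists>k. \<forall>l. l \<noteq> 0 \<longrightarrow> kdim C1 C2 K l = k" by blast
qed

lemma eq_Max_range_iff_complement_constant:
  fixes r k :: "'a::zero \<Rightarrow> nat" and a :: 'a
  assumes "r 0 = 0" and "a \<noteq> 0" and sum: "\<And>l. l \<noteq> 0 \<Longrightarrow> k l + r l = m"
  shows "(\<forall>l. l \<noteq> 0 \<longrightarrow> r l = Max (range r)) \<longleftrightarrow> (\<exists>c. \<forall>l. l \<noteq> 0 \<longrightarrow> k l = c)"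
proof
  assume "\<forall>l. l \<noteq> 0 \<longrightarrow> r l = Max (range r)"
  then show "\<exists>c. \<forall>l. l \<noteq> 0 \<longrightarrow> k l = c"
    using sum by (intro exI[of _ "m - Max (range r)"]) (metis add_implies_diff)
next
  assume "\<exists>c. \<forall>l. l \<noteq> 0 \<longrightarrow> k l = c"
  then obtain c where c: "\<And>l. l \<noteq> 0 \<Longrightarrow> r l = m - c"
    using sum by (metis add_diff_cancel_left')
  have "r l \<in> {0, m - c}" for l using c assms(1) by (cases "l = 0") auto
  then have "range r \<subseteq> {0, m - c}" by (simp add: image_subset_iff)
  moreover have "m - c \<in> range r" using c[OF assms(2)] rangeI[of r a] by simp
  ultimately have "Max (range r) = m - c"
    by (intro Max_eqI) (auto intro: finite_subset)
  then show "\<forall>l. l \<noteq> 0 \<longrightarrow> r l = Max (range r)" using c by simp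
qed

theorem mainTheorem6:
  fixes C1 C2 :: "complex^'n^'n"
    and K :: "(complex^'n) set"
    and Q :: "complex^'n^'m"
    and lhat :: "nat \<Rightarrow> complex^2"
    and s :: nat
  assumes biv: "bivector C1" "bivector C2"
    and generic: "\<exists>l. nondeg (comb C1 C2 l)"
    and Ksub: "vec.subspace K"
    and Qsurj: "surj (\<lambda>v. Q *v v)"
    and Qker: "{v. Q *v v = 0} = K"
    and indep: "\<forall>l. comb (push Q C1) (push Q C2) l = 0 \<longrightarrow> l = 0"
    and lhat_nz: "\<forall>i<s. lhat i \<noteq> 0"
    and lhat_dist: "\<forall>i<s. \<forall>j<s. i \<noteq> j \<longrightarrow> (\<forall>t. lhat j \<noteq> t *s lhat i)"
    and lines: "{l. \<not> nondeg (comb C1 C2 l)} = {t *s lhat i | t i. i < s}"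
    and transv: "\<forall>i<s. annih K \<inter> {\<xi>. sharp (comb C1 C2 (lhat i)) \<xi> = 0} = {0}"
  shows "(\<forall>l. l \<noteq> 0 \<longrightarrow>
            kdim C1 C2 K l = CARD('m) - vec.dim (Pc (comb (push Q C1) (push Q C2) l)))
       \<and> ((\<forall>l. l \<noteq> 0 \<longrightarrow>
              brank (comb (push Q C1) (push Q C2) l)
              = Max (range (\<lambda>\<mu>. brank (comb (push Q C1) (push Q C2) \<mu>))))
          \<longleftrightarrow>
          (\<exists>k. (\<forall>l. l \<notin> {t *s lhat i | t i. i < s} \<longrightarrow> kdim C1 C2 K l = k)
               \<and> (\<forall>i<s. kdim C1 C2 K (lhat i) = k)))"
proof -
  let ?r = "\<lambda>l. brank (comb (push Q C1) (push Q C2) l)"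
  have rank: "kdim C1 C2 K l + ?r l = CARD('m)" if "l \<noteq> 0" for l
    using dim_Int_sharp_annih_add_brank_push[OF Qsurj Qker inj_on_sharp_comb_annih[OF lines transv that]]
    by (simp add: kdim_def push_comb)
  have "0 \<in> {l. \<not> nondeg (comb C1 C2 l)}"
    using not_nondeg_zero by simp
  then have "0 < s"
    unfolding lines by auto
  have "(\<forall>l. l \<noteq> 0 \<longrightarrow> ?r l = Max (range ?r)) \<longleftrightarrow> (\<exists>k. \<forall>l. l \<noteq> 0 \<longrightarrow> kdim C1 C2 K l = k)"
    by (rule eq_Max_range_iff_complement_constant[of _ "axis 1 (1::complex)", OF _ _ rank])
      (simp_all add: axis_eq_0_iff)
  also have "\<dots> \<longleftrightarrow> (\<exists>k. (\<forall>l. l \<notin> {t *s lhat i | t i. i < s} \<longrightarrow> kdim C1 C2 K l = k)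
               \<and> (\<forall>i<s. kdim C1 C2 K (lhat i) = k))"
    by (rule kdim_constant_iff[OF \<open>0 < s\<close> lhat_nz])
  finally show ?thesis
    using rank[THEN add_implies_diff] unfolding brank_def by blast
qed

end
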